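(* Let $c\ge1$, let $G\cong F/R$ with $F$ free, and let $B=S/R$ be a normal subgroup of $G$ (with $R\le S\trianglelefteq F$), so that $A=G/B\cong F/S$. For $2\le i\le c+1$ let $\gamma_{c+1}(S,F)_i=[D_1,D_2,\dots,D_{c+1}]$ where $D_1=D_i=S$ and $D_j=F$ for $j\ne1,i$. Then there is an epimorphism $$\otimes^{c+1}(B,A)\longrightarrow\frac{[S,{}_cF]}{[R,{}_cF]\,[S,{}_{c+1}F]\,\prod_{i=2}^{c+1}\gamma_{c+1}(S,F)_i},$$ sending $sRS'\otimes f_1SF'\otimes\cdots\otimes f_cSF'$ to the coset of $[s,f_1,\dots,f_c]$ ($s\in S$, $f_i\in F$).
   Context: Commutators are left-normed: $[x_1,\dots,x_{m+1}]=[[x_1,\dots,x_m],x_{m+1}]$, and similarly $[D_1,\dots,D_{m+1}]=[[D_1,\dots,D_m],D_{m+1}]$ for subgroups. $[U,{}_0V]=U$, $[U,{}_{i+1}V]=[[U,{}_iV],V]$. For groups $B,A$, $\otimes^{c+1}(B,A)$ denotes the tensor product over $\mathbb Z$ $B_{ab}\otimes A_{ab}\otimes\cdots\otimes A_{ab}$ with $c$ copies of $A_{ab}$, where $X_{ab}=X/X'$; here $B_{ab}\cong S/RS'$ and $A_{ab}\cong F/SF'$. *)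

theory Defs
  imports "HOL-Algebra.Algebra" "HOL-Algebra.Free_Abelian_Groups"
begin

definition gcomm :: "('a,'b) monoid_scheme \<Rightarrow> 'a \<Rightarrow> 'a \<Rightarrow> 'a" where
  "gcomm G x y = inv\<^bsub>G\<^esub> x \<otimes>\<^bsub>G\<^esub> inv\<^bsub>G\<^esub> y \<otimes>\<^bsub>G\<^esub> x \<otimes>\<^bsub>G\<^esub> y"

fun lcomm :: "('a,'b) monoid_scheme \<Rightarrow> 'a \<Rightarrow> 'a list \<Rightarrow> 'a" where
  "lcomm G x [] = x"
| "lcomm G x (y # ys) = lcomm G (gcomm G x y) ys"

definition commsub :: "('a,'b) monoid_scheme \<Rightarrow> 'a set \<Rightarrow> 'a set \<Rightarrow> 'a set" where
  "commsub G H K = generate G {gcomm G h k | h k. h \<in> H \<and> k \<in> K}"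

fun itcomm :: "('a,'b) monoid_scheme \<Rightarrow> 'a set \<Rightarrow> 'a set \<Rightarrow> nat \<Rightarrow> 'a set" where
  "itcomm G U V 0 = U"
| "itcomm G U V (Suc i) = commsub G (itcomm G U V i) V"

fun lcommsub :: "('a,'b) monoid_scheme \<Rightarrow> 'a set \<Rightarrow> 'a set list \<Rightarrow> 'a set" where
  "lcommsub G D [] = D"
| "lcommsub G D (E # Es) = lcommsub G (commsub G D E) Es"

definition gammaSF :: "('a,'b) monoid_scheme \<Rightarrow> 'a set \<Rightarrow> nat \<Rightarrow> nat \<Rightarrow> 'a set" where
  "gammaSF F S c i = lcommsub F S (map (\<lambda>j. if j = i then S else carrier F) [2..<c+2])"

definition word_val :: "('a,'b) monoid_scheme \<Rightarrow> ('a \<times> bool) list \<Rightarrow> 'a" where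
  "word_val G w = foldr (\<lambda>(x,b) y. (if b then x else inv\<^bsub>G\<^esub> x) \<otimes>\<^bsub>G\<^esub> y) w \<one>\<^bsub>G\<^esub>"

definition reduced_word :: "('a \<times> bool) list \<Rightarrow> bool" where
  "reduced_word w = (\<forall>i. Suc i < length w \<longrightarrow>
       \<not> (fst (w ! i) = fst (w ! Suc i) \<and> snd (w ! i) \<noteq> snd (w ! Suc i)))"

definition free_basis :: "('a,'b) monoid_scheme \<Rightarrow> 'a set \<Rightarrow> bool" where
  "free_basis G Bs = (Bs \<subseteq> carrier G \<and> generate G Bs = carrier G \<and>
     (\<forall>w. w \<noteq> [] \<and> fst ` set w \<subseteq> Bs \<and> reduced_word w \<longrightarrow> \<not> (word_val G w = \<one>\<^bsub>G\<^esub>)))"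

definition free_group :: "('a,'b) monoid_scheme \<Rightarrow> bool" where
  "free_group G = (group G \<and> (\<exists>XX. free_basis G XX))"

(* Tensor product over Z of XX with c copies of YY (XX, YY abelian groups):
   free abelian group on XX \<times> YY^c modulo multilinearity relations *)
definition tens_gens :: "('x,'m) monoid_scheme \<Rightarrow> ('y,'n) monoid_scheme \<Rightarrow> nat \<Rightarrow> ('x \<times> 'y list) set" where
  "tens_gens XX YY c = carrier XX \<times> {as. length as = c \<and> set as \<subseteq> carrier YY}"

definition tens_free :: "('x,'m) monoid_scheme \<Rightarrow> ('y,'n) monoid_scheme \<Rightarrow> nat \<Rightarrow> (('x \<times> 'y list) \<Rightarrow>\<^sub>0 int) monoid" where
  "tens_free XX YY c = free_Abelian_group (tens_gens XX YY c)"

definition tens_rels :: "('x,'m) monoid_scheme \<Rightarrow> ('y,'n) monoid_scheme \<Rightarrow> nat \<Rightarrow> (('x \<times> 'y list) \<Rightarrow>\<^sub>0 int) set" where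
  "tens_rels XX YY c =
     {frag_of (b1 \<otimes>\<^bsub>XX\<^esub> b2, as) - frag_of (b1, as) - frag_of (b2, as) | b1 b2 as.
        b1 \<in> carrier XX \<and> b2 \<in> carrier XX \<and> length as = c \<and> set as \<subseteq> carrier YY}
   \<union> {frag_of (b, as[j := a1 \<otimes>\<^bsub>YY\<^esub> a2]) - frag_of (b, as[j := a1]) - frag_of (b, as[j := a2])
        | b as j a1 a2. b \<in> carrier XX \<and> length as = c \<and> set as \<subseteq> carrier YY \<and> j < c
        \<and> a1 \<in> carrier YY \<and> a2 \<in> carrier YY}"

definition tensor :: "('x,'m) monoid_scheme \<Rightarrow> ('y,'n) monoid_scheme \<Rightarrow> nat \<Rightarrow> (('x \<times> 'y list) \<Rightarrow>\<^sub>0 int) set monoid" where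
  "tensor XX YY c = tens_free XX YY c Mod generate (tens_free XX YY c) (tens_rels XX YY c)"

definition pure_tensor :: "('x,'m) monoid_scheme \<Rightarrow> ('y,'n) monoid_scheme \<Rightarrow> nat \<Rightarrow> 'x \<Rightarrow> 'y list \<Rightarrow> (('x \<times> 'y list) \<Rightarrow>\<^sub>0 int) set" where
  "pure_tensor XX YY c b as =
     generate (tens_free XX YY c) (tens_rels XX YY c) #>\<^bsub>tens_free XX YY c\<^esub> frag_of (b, as)"

end

theory Submission
  imports Defs
begin

(* Locale commutator_tensor: for a normal N with [R,_c F], [S,_{c+1} F], the
      gamma_{c+1}(S,F)_i inside N and N inside [S,_c F], the coset of [s, f1, ..., fc] is
      multiplicative in s and in each fj, is trivial when s is in R[S,S] or some fj is in
      S[F,F], and these cosets generate the abelian group [S,_c F]/N.  Together with the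
      universal property this yields the epimorphism (commutator_tensor_epi).
   5. The theorem: the subgroup N of the statement satisfies the locale assumptions. *)

lemma lcomm_append: "lcomm G x (xs @ ys) = lcomm G (lcomm G x xs) ys"
  by (induction xs arbitrary: x) auto

lemma itcomm_Suc_inner: "itcomm G K C (Suc n) = itcomm G (commsub G K C) C n"
  by (induction n) auto

lemma itcomm_add: "itcomm G (itcomm G K C a) C b = itcomm G K C (a + b)"
  by (induction b) auto

lemma lcommsub_append: "lcommsub G K (xs @ ys) = lcommsub G (lcommsub G K xs) ys"
  by (induction xs arbitrary: K) auto

lemma lcommsub_replicate: "lcommsub G K (replicate n C) = itcomm G K C n"
  by (induction n arbitrary: K) (simp_all add: itcomm_Suc_inner del: itcomm.simps(2))

lemma gammaSF_eq:
  assumes "2 \<le> i" "i \<le> c + 1"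
  shows "gammaSF F S c i
           = itcomm F (commsub F (itcomm F S (carrier F) (i - 2)) S) (carrier F) (c + 1 - i)"
proof -
  let ?D = "\<lambda>j. if j = i then S else carrier F"
  have split: "[2..<c+2] = [2..<i] @ i # [Suc i..<c+2]"
    using assms upt_add_eq_append[of 2 i "c + 2 - i"] by (simp add: upt_conv_Cons)
  have before: "map ?D [2..<i] = replicate (i - 2) (carrier F)"
  proof -
    have "map ?D [2..<i] = map (\<lambda>_. carrier F) [2..<i]" by (rule map_cong) auto
    then show ?thesis by (simp add: map_replicate_const)
  qed
  have after: "map ?D [Suc i..<c+2] = replicate (c + 1 - i) (carrier F)"
  proof -
    have "map ?D [Suc i..<c+2] = map (\<lambda>_. carrier F) [Suc i..<c+2]" by (rule map_cong) auto
    then show ?thesis by (simp only: map_replicate_const length_upt) simp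
  qed
  show ?thesis
    unfolding gammaSF_def split map_append list.map before after
    by (simp add: lcommsub_append lcommsub_replicate)
qed

section \<open>Commutator calculus in a group\<close>

context group
begin

lemma gcomm_closed [simp]: "x \<in> carrier G \<Longrightarrow> y \<in> carrier G \<Longrightarrow> gcomm G x y \<in> carrier G"
  by (simp add: gcomm_def)

lemma gcomm_one_left [simp]: "g \<in> carrier G \<Longrightarrow> gcomm G \<one> g = \<one>"
  by (simp add: gcomm_def)

lemma lcomm_closed [simp]: "x \<in> carrier G \<Longrightarrow> set gs \<subseteq> carrier G \<Longrightarrow> lcomm G x gs \<in> carrier G"
  by (induction gs arbitrary: x) auto

lemma lcomm_one [simp]: "set gs \<subseteq> carrier G \<Longrightarrow> lcomm G \<one> gs = \<one>"
  by (induction gs) auto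

lemma cancel_left_inv [simp]: "x \<in> carrier G \<Longrightarrow> y \<in> carrier G \<Longrightarrow> x \<otimes> (inv x \<otimes> y) = y"
  by (simp add: m_assoc[symmetric])

lemma cancel_inv_left [simp]: "x \<in> carrier G \<Longrightarrow> y \<in> carrier G \<Longrightarrow> inv x \<otimes> (x \<otimes> y) = y"
  by (simp add: m_assoc[symmetric])

lemma gcomm_mult_left:
  "x \<in> carrier G \<Longrightarrow> y \<in> carrier G \<Longrightarrow> g \<in> carrier G \<Longrightarrow>
   gcomm G (x \<otimes> y) g = gcomm G x g \<otimes> gcomm G (gcomm G x g) y \<otimes> gcomm G y g"
  by (simp add: gcomm_def m_assoc inv_mult_group)

lemma gcomm_mult_left_conj:
  "x \<in> carrier G \<Longrightarrow> y \<in> carrier G \<Longrightarrow> g \<in> carrier G \<Longrightarrow>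
   gcomm G (x \<otimes> y) g
     = (gcomm G x g \<otimes> gcomm G y g) \<otimes> (inv (gcomm G y g) \<otimes> gcomm G (gcomm G x g) y \<otimes> gcomm G y g)"
  by (simp add: gcomm_def m_assoc inv_mult_group)

lemma gcomm_mult_right:
  "x \<in> carrier G \<Longrightarrow> f \<in> carrier G \<Longrightarrow> g \<in> carrier G \<Longrightarrow>
   gcomm G x (f \<otimes> g)
     = gcomm G x f \<otimes> gcomm G x g \<otimes> (gcomm G (gcomm G x g) (gcomm G x f) \<otimes> gcomm G (gcomm G x f) g)"
  by (simp add: gcomm_def m_assoc inv_mult_group)

lemma gcomm_conj:
  "g \<in> carrier G \<Longrightarrow> h \<in> carrier G \<Longrightarrow> k \<in> carrier G \<Longrightarrow>
   g \<otimes> gcomm G h k \<otimes> inv g = gcomm G (g \<otimes> h \<otimes> inv g) (g \<otimes> k \<otimes> inv g)"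
  by (simp add: gcomm_def m_assoc inv_mult_group)

lemma gcomm_swap: "a \<in> carrier G \<Longrightarrow> k \<in> carrier G \<Longrightarrow> gcomm G a k = inv (gcomm G k a)"
  by (simp add: gcomm_def m_assoc inv_mult_group)

lemma mult_swap_gcomm: "x \<in> carrier G \<Longrightarrow> y \<in> carrier G \<Longrightarrow> x \<otimes> y = y \<otimes> x \<otimes> gcomm G x y"
  by (simp add: gcomm_def m_assoc inv_mult_group)

lemma normal_subset: "H \<lhd> G \<Longrightarrow> H \<subseteq> carrier G"
  by (simp add: normal_imp_subgroup subgroup.subset)

lemma commsub_subset: "H \<subseteq> carrier G \<Longrightarrow> K \<subseteq> carrier G \<Longrightarrow> commsub G H K \<subseteq> carrier G"
  unfolding commsub_def by (rule generate_incl) (blast intro: gcomm_closed)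

lemma gcomm_in_commsub: "h \<in> H \<Longrightarrow> k \<in> K \<Longrightarrow> gcomm G h k \<in> commsub G H K"
  unfolding commsub_def by (rule generate.incl) auto

lemma commsub_mono: "H \<subseteq> H' \<Longrightarrow> K \<subseteq> K' \<Longrightarrow> commsub G H K \<subseteq> commsub G H' K'"
  unfolding commsub_def by (rule mono_generate) blast

lemma commsub_normal:
  assumes "H \<lhd> G" "K \<lhd> G" shows "commsub G H K \<lhd> G"
  unfolding commsub_def
proof (rule normal_generateI)
  have carr: "H \<subseteq> carrier G" "K \<subseteq> carrier G" using assms by (simp_all add: normal_subset)
  then show "{gcomm G h k |h k. h \<in> H \<and> k \<in> K} \<subseteq> carrier G"
    by (blast intro: gcomm_closed)
  fix x g assume "x \<in> {gcomm G h k |h k. h \<in> H \<and> k \<in> K}" and g: "g \<in> carrier G"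
  then obtain h k where hk: "x = gcomm G h k" "h \<in> H" "k \<in> K" by auto
  have "g \<otimes> x \<otimes> inv g = gcomm G (g \<otimes> h \<otimes> inv g) (g \<otimes> k \<otimes> inv g)"
    unfolding hk(1) by (rule gcomm_conj) (use g hk carr in auto)
  moreover have "g \<otimes> h \<otimes> inv g \<in> H" "g \<otimes> k \<otimes> inv g \<in> K"
    using hk g normal.inv_op_closed2[OF assms(1)] normal.inv_op_closed2[OF assms(2)] by auto
  ultimately show "g \<otimes> x \<otimes> inv g \<in> {gcomm G h k |h k. h \<in> H \<and> k \<in> K}" by blast
qed

lemma commsub_normal_subset:
  assumes "H \<lhd> G" "K \<subseteq> carrier G" shows "commsub G H K \<subseteq> H"
  unfolding commsub_def
proof (rule generate_subgroup_incl)
  interpret H: normal H G by fact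
  show "subgroup H G" by (rule H.subgroup_axioms)
  show "{gcomm G h k |h k. h \<in> H \<and> k \<in> K} \<subseteq> H"
  proof clarify
    fix h k assume hk: "h \<in> H" "k \<in> K"
    then have "h \<in> carrier G" "k \<in> carrier G" using assms by auto
    then have "gcomm G h k = inv h \<otimes> (inv k \<otimes> h \<otimes> k)" by (simp add: gcomm_def m_assoc)
    moreover have "inv k \<otimes> h \<otimes> k \<in> H" using H.inv_op_closed1 hk \<open>k \<in> carrier G\<close> by blast
    ultimately show "gcomm G h k \<in> H" using hk by (simp add: H.m_closed H.m_inv_closed)
  qed
qed

lemma itcomm_normal: "K \<lhd> G \<Longrightarrow> itcomm G K (carrier G) n \<lhd> G"
  by (induction n) (auto intro: commsub_normal normal_self)

lemma itcomm_mono: "K \<subseteq> K' \<Longrightarrow> itcomm G K C n \<subseteq> itcomm G K' C n"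
  by (induction n) (simp_all add: commsub_mono)

lemma itcomm_antimono:
  assumes "K \<lhd> G" "m \<le> n" shows "itcomm G K (carrier G) n \<subseteq> itcomm G K (carrier G) m"
  using assms(2)
proof (induction n)
  case (Suc n)
  have "itcomm G K (carrier G) (Suc n) \<subseteq> itcomm G K (carrier G) n"
    using commsub_normal_subset[OF itcomm_normal[OF assms(1)]] by simp
  then show ?case using Suc by (cases "m = Suc n") auto
qed simp

lemma lcomm_in_itcomm:
  assumes "K \<lhd> G" "x \<in> K" "set gs \<subseteq> carrier G"
  shows "lcomm G x gs \<in> itcomm G K (carrier G) (length gs)"
  using assms
proof (induction gs arbitrary: x K)
  case (Cons g gs)
  have "gcomm G x g \<in> commsub G K (carrier G)" using Cons.prems by (intro gcomm_in_commsub) auto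
  then have "lcomm G (gcomm G x g) gs \<in> itcomm G (commsub G K (carrier G)) (carrier G) (length gs)"
    using Cons by (intro Cons.IH) (auto intro: commsub_normal normal_self)
  then show ?case by (simp add: itcomm_Suc_inner del: itcomm.simps(2))
qed simp

end

lemma (in group) gammaSF_normal:
  assumes "S \<lhd> G" "2 \<le> i" "i \<le> c + 1"
  shows "gammaSF G S c i \<lhd> G"
  unfolding gammaSF_eq[OF assms(2,3)]
  by (intro itcomm_normal commsub_normal assms(1))

lemma (in group) gammaSF_subset:
  assumes "S \<lhd> G" "2 \<le> i" "i \<le> c + 1"
  shows "gammaSF G S c i \<subseteq> itcomm G S (carrier G) c"
proof -
  let ?T = "itcomm G S (carrier G)"
  have "gammaSF G S c i \<subseteq> itcomm G (commsub G (?T (i - 2)) (carrier G)) (carrier G) (c + 1 - i)"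
    unfolding gammaSF_eq[OF assms(2,3)]
    by (intro itcomm_mono commsub_mono) (use normal_subset[OF assms(1)] in auto)
  also have "\<dots> = ?T (Suc (i - 2) + (c + 1 - i))"
    unfolding itcomm.simps(2)[symmetric] itcomm_add ..
  also have "Suc (i - 2) + (c + 1 - i) = c" using assms(2,3) by simp
  finally show ?thesis .
qed

lemma (in group) generate_in_kernel:
  assumes S': "subgroup S' G" and A: "A \<subseteq> S'" and K: "group K"
    and W: "W \<in> hom (G\<lparr>carrier := S'\<rparr>) K" and kill: "\<And>x. x \<in> A \<Longrightarrow> W x = \<one>\<^bsub>K\<^esub>"
    and y: "y \<in> generate G A"
  shows "W y = \<one>\<^bsub>K\<^esub>"
proof -
  interpret W: group_hom "G\<lparr>carrier := S'\<rparr>" K W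
    unfolding group_hom_def group_hom_axioms_def
    using subgroup.subgroup_is_group[OF S' is_group] K W by simp
  have gen_S': "generate G A \<subseteq> S'" by (rule generate_subgroup_incl[OF A S'])
  from y show ?thesis
  proof (induction rule: generate.induct)
    case one
    show ?case using W.hom_one by simp
  next
    case (incl x)
    then show ?case by (rule kill)
  next
    case (inv x)
    then have "x \<in> S'" using A by blast
    then show ?case
      using W.hom_inv[of x] kill[OF inv] m_inv_consistent[OF S'] by simp
  next
    case (eng x y)
    then have "x \<in> S'" "y \<in> S'" using gen_S' by blast+
    then show ?case using W.hom_mult[of x y] eng.IH by simp
  qed
qed

lemma (in group_hom) derived_subgroup_in_kernel:
  assumes comm: "\<And>a b. a \<in> carrier G \<Longrightarrow> b \<in> carrier G \<Longrightarrow> h a \<otimes>\<^bsub>H\<^esub> h b = h b \<otimes>\<^bsub>H\<^esub> h a"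
    and y: "y \<in> commsub G (carrier G) (carrier G)"
  shows "h y = \<one>\<^bsub>H\<^esub>"
proof -
  have killed: "h (gcomm G a b) = \<one>\<^bsub>H\<^esub>" if "a \<in> carrier G" "b \<in> carrier G" for a b
  proof -
    have "h (gcomm G a b) = inv\<^bsub>H\<^esub> h a \<otimes>\<^bsub>H\<^esub> inv\<^bsub>H\<^esub> h b \<otimes>\<^bsub>H\<^esub> h a \<otimes>\<^bsub>H\<^esub> h b"
      using that by (simp add: gcomm_def)
    also have "\<dots> = inv\<^bsub>H\<^esub> h a \<otimes>\<^bsub>H\<^esub> (inv\<^bsub>H\<^esub> h b \<otimes>\<^bsub>H\<^esub> (h b \<otimes>\<^bsub>H\<^esub> h a))"
      using that comm[of a b] by (simp add: H.m_assoc)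
    also have "\<dots> = \<one>\<^bsub>H\<^esub>"
      using that by simp
    finally show ?thesis .
  qed
  show ?thesis
  proof (rule G.generate_in_kernel[OF G.subgroup_self _ H.is_group])
    show "{gcomm G a b |a b. a \<in> carrier G \<and> b \<in> carrier G} \<subseteq> carrier G" by auto
    show "h \<in> hom (G\<lparr>carrier := carrier G\<rparr>) H" using homh by simp
    show "y \<in> generate G {gcomm G a b |a b. a \<in> carrier G \<and> b \<in> carrier G}"
      using y unfolding commsub_def .
  qed (use killed in blast)
qed

lemma (in group) generate_Union_normal:
  assumes normal: "\<And>U. U \<in> \<U> \<Longrightarrow> U \<lhd> G"
  shows "generate G (\<Union>\<U>) \<lhd> G"
proof (rule normal_generateI)
  show "\<Union>\<U> \<subseteq> carrier G"
  proof
    fix h assume "h \<in> \<Union>\<U>"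
    then obtain U where "U \<in> \<U>" "h \<in> U" by blast
    then show "h \<in> carrier G" using normal_subset[OF normal] by blast
  qed
  fix h g assume "h \<in> \<Union>\<U>" and g: "g \<in> carrier G"
  then obtain U where U: "U \<in> \<U>" "h \<in> U" by blast
  then have "g \<otimes> h \<otimes> inv g \<in> U" using normal.inv_op_closed2[OF normal g] by blast
  then show "g \<otimes> h \<otimes> inv g \<in> \<Union>\<U>" using U(1) by blast
qed

section \<open>Universal property of the tensor product\<close>

lemma hom_free_diff:
  assumes h: "h \<in> hom (free_Abelian_group T) K" and K: "group K"
    and x: "Poly_Mapping.keys x \<subseteq> T" and y: "Poly_Mapping.keys y \<subseteq> T"
  shows "h (x - y) = h x \<otimes>\<^bsub>K\<^esub> inv\<^bsub>K\<^esub> (h y)"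
proof -
  interpret gh: group_hom "free_Abelian_group T" K h
    unfolding group_hom_def group_hom_axioms_def using h K by simp
  have "h (x - y) = h (x \<otimes>\<^bsub>free_Abelian_group T\<^esub> inv\<^bsub>free_Abelian_group T\<^esub> y)"
    using y by simp
  also have "\<dots> = h x \<otimes>\<^bsub>K\<^esub> h (inv\<^bsub>free_Abelian_group T\<^esub> y)"
    by (rule gh.hom_mult) (use x y in simp_all)
  also have "h (inv\<^bsub>free_Abelian_group T\<^esub> y) = inv\<^bsub>K\<^esub> (h y)"
    by (rule gh.hom_inv) (use y in simp)
  finally show ?thesis .
qed

lemma (in comm_group) frag_relation_in_kernel:
  assumes h: "h \<in> hom (free_Abelian_group T) G"
    and A: "A \<in> T" and B: "B \<in> T" and C: "C \<in> T"
    and rel: "h (frag_of A) = h (frag_of B) \<otimes> h (frag_of C)"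
  shows "frag_of A - frag_of B - frag_of C \<in> kernel (free_Abelian_group T) G h"
proof -
  have keysAB: "Poly_Mapping.keys (frag_of A - frag_of B) \<subseteq> T"
    using keys_diff[of "frag_of A" "frag_of B"] A B by (auto simp: keys_frag_of)
  have keys: "Poly_Mapping.keys (frag_of A - frag_of B - frag_of C) \<subseteq> T"
    using keys_diff[of "frag_of A - frag_of B" "frag_of C"] keysAB C by (auto simp: keys_frag_of)
  have hB: "h (frag_of B) \<in> carrier G" and hC: "h (frag_of C) \<in> carrier G"
    using hom_in_carrier[OF h] B C by simp_all
  have "h (frag_of A - frag_of B - frag_of C)
          = h (frag_of A) \<otimes> inv h (frag_of B) \<otimes> inv h (frag_of C)"
    using hom_free_diff[OF h is_group keysAB] hom_free_diff[OF h is_group] A B C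
    by (simp add: keys_frag_of)
  also have "\<dots> = (h (frag_of B) \<otimes> h (frag_of C)) \<otimes> inv (h (frag_of B) \<otimes> h (frag_of C))"
    using rel hB hC by (simp add: inv_mult m_assoc)
  also have "\<dots> = \<one>" using hB hC by simp
  finally show ?thesis using keys unfolding kernel_def by simp
qed

text \<open>The image is recorded as a subgroup for later surjectivity arguments.\<close>

lemma tensor_universal:
  fixes XX :: "('x, 'm) monoid_scheme" and YY :: "('y, 'n) monoid_scheme"
    and K :: "('k, 'l) monoid_scheme" and f :: "'x \<times> 'y list \<Rightarrow> 'k"
  assumes K: "comm_group K"
    and XX_closed: "\<And>b1 b2. b1 \<in> carrier XX \<Longrightarrow> b2 \<in> carrier XX \<Longrightarrow> b1 \<otimes>\<^bsub>XX\<^esub> b2 \<in> carrier XX"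
    and YY_closed: "\<And>a1 a2. a1 \<in> carrier YY \<Longrightarrow> a2 \<in> carrier YY \<Longrightarrow> a1 \<otimes>\<^bsub>YY\<^esub> a2 \<in> carrier YY"
    and f_carrier: "\<And>p. p \<in> tens_gens XX YY c \<Longrightarrow> f p \<in> carrier K"
    and f_first: "\<And>b1 b2 as. b1 \<in> carrier XX \<Longrightarrow> b2 \<in> carrier XX \<Longrightarrow> length as = c
                    \<Longrightarrow> set as \<subseteq> carrier YY
                    \<Longrightarrow> f (b1 \<otimes>\<^bsub>XX\<^esub> b2, as) = f (b1, as) \<otimes>\<^bsub>K\<^esub> f (b2, as)"
    and f_entry: "\<And>b as j a1 a2. b \<in> carrier XX \<Longrightarrow> length as = c \<Longrightarrow> set as \<subseteq> carrier YY
                    \<Longrightarrow> j < c \<Longrightarrow> a1 \<in> carrier YY \<Longrightarrow> a2 \<in> carrier YY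
                    \<Longrightarrow> f (b, as[j := a1 \<otimes>\<^bsub>YY\<^esub> a2]) = f (b, as[j := a1]) \<otimes>\<^bsub>K\<^esub> f (b, as[j := a2])"
  obtains g where "g \<in> hom (tensor XX YY c) K" "subgroup (g ` carrier (tensor XX YY c)) K"
    "\<And>b as. (b, as) \<in> tens_gens XX YY c \<Longrightarrow> g (pure_tensor XX YY c b as) = f (b, as)"
proof -
  interpret K: comm_group K by (rule K)
  let ?T = "tens_gens XX YY c"
  let ?G = "free_Abelian_group ?T"
  let ?Rel = "generate ?G (tens_rels XX YY c)"
  interpret G: comm_group ?G by (rule abelian_free_Abelian_group)
  obtain h where h: "h \<in> hom ?G K" "\<And>p. p \<in> ?T \<Longrightarrow> h (frag_of p) = f p"
    using K.free_Abelian_group_universal[of f ?T] f_carrier by blast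
  interpret gh: group_hom ?G K h
    unfolding group_hom_def group_hom_axioms_def using h(1) G.is_group K.is_group by simp
  have upd_gen: "(b, as[j := a]) \<in> ?T" if "(b, as) \<in> ?T" "a \<in> carrier YY" for b as j a
    using that set_update_subset_insert[of as j a] unfolding tens_gens_def by auto
  have rels: "tens_rels XX YY c \<subseteq> kernel ?G K h"
  proof
    fix r assume "r \<in> tens_rels XX YY c"
    then consider
      (first) b1 b2 as where
        "r = frag_of (b1 \<otimes>\<^bsub>XX\<^esub> b2, as) - frag_of (b1, as) - frag_of (b2, as)"
        "b1 \<in> carrier XX" "b2 \<in> carrier XX" "length as = c" "set as \<subseteq> carrier YY"
    | (entry) b as j a1 a2 where
        "r = frag_of (b, as[j := a1 \<otimes>\<^bsub>YY\<^esub> a2]) - frag_of (b, as[j := a1]) - frag_of (b, as[j := a2])"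
        "b \<in> carrier XX" "length as = c" "set as \<subseteq> carrier YY" "j < c"
        "a1 \<in> carrier YY" "a2 \<in> carrier YY"
      unfolding tens_rels_def by blast
    then show "r \<in> kernel ?G K h"
    proof cases
      case first
      then have gens: "(b1 \<otimes>\<^bsub>XX\<^esub> b2, as) \<in> ?T" "(b1, as) \<in> ?T" "(b2, as) \<in> ?T"
        using XX_closed unfolding tens_gens_def by auto
      show ?thesis unfolding first(1)
        by (rule K.frag_relation_in_kernel[OF h(1) gens]) (simp add: h(2) gens f_first first)
    next
      case entry
      then have "(b, as) \<in> ?T" unfolding tens_gens_def by auto
      then have gens: "(b, as[j := a1 \<otimes>\<^bsub>YY\<^esub> a2]) \<in> ?T" "(b, as[j := a1]) \<in> ?T" "(b, as[j := a2]) \<in> ?T"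
        using upd_gen YY_closed entry by auto
      show ?thesis unfolding entry(1)
        by (rule K.frag_relation_in_kernel[OF h(1) gens]) (simp add: h(2) gens f_entry entry)
    qed
  qed
  have Rel_normal: "?Rel \<lhd> ?G"
    using G.normal_iff_subgroup G.generate_is_subgroup rels unfolding kernel_def by blast
  have Rel_kernel: "?Rel \<subseteq> kernel ?G K h"
    by (rule G.generate_subgroup_incl[OF rels gh.subgroup_kernel])
  obtain g where g: "g \<in> hom (?G Mod ?Rel) K" "\<And>x. x \<in> carrier ?G \<Longrightarrow> g (?Rel #>\<^bsub>?G\<^esub> x) = h x"
    using gh.FactGroup_universal_kernel[OF Rel_normal Rel_kernel] by blast
  have tensor: "tensor XX YY c = ?G Mod ?Rel" by (simp add: tensor_def tens_free_def)
  show thesis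
  proof (rule that)
    show "g \<in> hom (tensor XX YY c) K" using g(1) by (simp add: tensor)
    have "group_hom (?G Mod ?Rel) K g"
      unfolding group_hom_def group_hom_axioms_def
      using normal.factorgroup_is_group[OF Rel_normal] K.is_group g(1) by simp
    then show "subgroup (g ` carrier (tensor XX YY c)) K"
      unfolding tensor by (rule group_hom.img_is_subgroup)
    fix b as assume "(b, as) \<in> ?T"
    then show "g (pure_tensor XX YY c b as) = f (b, as)"
      using g(2)[of "frag_of (b, as)"] h(2) by (simp add: pure_tensor_def tens_free_def)
  qed
qed

lemma pure_tensor_carrier:
  "(b, as) \<in> tens_gens XX YY c \<Longrightarrow> pure_tensor XX YY c b as \<in> carrier (tensor XX YY c)"
  unfolding pure_tensor_def tensor_def tens_free_def carrier_FactGroup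
  by (auto simp: keys_frag_of)

section \<open>Commutators modulo a normal subgroup\<close>

text \<open>Quotient-group operations are kept abstract; cosets are handled through the projection
  lemmas below.\<close>

declare one_FactGroup [simp del] mult_FactGroup [simp del]

locale comm_quotient = group F for F :: "('a, 'b) monoid_scheme" (structure) +
  fixes N :: "'a set"
  assumes N_normal: "N \<lhd> F"
begin

abbreviation Q where "Q \<equiv> F Mod N"

lemma Q_group: "group Q"
  by (rule normal.factorgroup_is_group[OF N_normal])

lemma N_subset: "N \<subseteq> carrier F"
  using N_normal by (rule normal_subset)

lemma coset_mult: "x \<in> carrier F \<Longrightarrow> y \<in> carrier F \<Longrightarrow> N #> (x \<otimes> y) = (N #> x) \<otimes>\<^bsub>Q\<^esub> (N #> y)"
  using normal.r_coset_hom_Mod[OF N_normal] by (simp add: hom_mult)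

lemma coset_carrier: "x \<in> carrier F \<Longrightarrow> N #> x \<in> carrier Q"
  using normal.r_coset_hom_Mod[OF N_normal] by (simp add: hom_in_carrier)

lemma coset_of_N: "x \<in> N \<Longrightarrow> N #> x = \<one>\<^bsub>Q\<^esub>"
  using N_normal by (simp add: normal_imp_subgroup subgroup.rcos_const is_group one_FactGroup)

lemma coset_one: "N #> \<one> = \<one>\<^bsub>Q\<^esub>"
  by (simp add: coset_of_N N_normal normal_imp_subgroup subgroup.one_closed)

lemma coset_mult_N: "y \<in> carrier F \<Longrightarrow> k \<in> N \<Longrightarrow> N #> (y \<otimes> k) = N #> y"
  using coset_mult[of y k] coset_of_N[of k] coset_carrier[of y] N_subset
    monoid.r_one[OF group.is_monoid[OF Q_group]] by auto

lemma lcomm_absorb: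
  assumes "K \<lhd> F" "itcomm F K (carrier F) (length gs) \<subseteq> N"
    and "y \<in> carrier F" "k \<in> K" "set gs \<subseteq> carrier F"
  shows "N #> lcomm F (y \<otimes> k) gs = N #> lcomm F y gs"
  using assms
proof (induction gs arbitrary: y k K)
  case Nil
  then show ?case using coset_mult_N by auto
next
  case (Cons g gs)
  have carr: "k \<in> carrier F" "g \<in> carrier F" "y \<in> carrier F"
    using Cons.prems normal_subset by auto
  let ?K' = "commsub F K (carrier F)"
  have K'_normal: "?K' \<lhd> F" using Cons.prems(1) by (intro commsub_normal normal_self)
  interpret K': subgroup ?K' F using normal_imp_subgroup[OF K'_normal] .
  text \<open>\<open>[yk, g] = [y, g] \<cdot> [[y, g], k] [k, g]\<close>, and the correction term lies in \<open>[K, F]\<close>.\<close>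
  have expand: "gcomm F (y \<otimes> k) g = gcomm F y g \<otimes> (gcomm F (gcomm F y g) k \<otimes> gcomm F k g)"
    using gcomm_mult_left[of y k g] carr by (simp add: m_assoc)
  have "gcomm F (gcomm F y g) k = inv (gcomm F k (gcomm F y g))"
    by (rule gcomm_swap) (use carr in simp_all)
  moreover have "gcomm F k (gcomm F y g) \<in> ?K'" using Cons.prems(4) carr by (simp add: gcomm_in_commsub)
  ultimately have "gcomm F (gcomm F y g) k \<in> ?K'" by simp
  moreover have "gcomm F k g \<in> ?K'" using Cons.prems(4) carr by (simp add: gcomm_in_commsub)
  ultimately have correction: "gcomm F (gcomm F y g) k \<otimes> gcomm F k g \<in> ?K'" by simp
  have "itcomm F ?K' (carrier F) (length gs) \<subseteq> N"
    using Cons.prems(2) by (simp add: itcomm_Suc_inner del: itcomm.simps(2))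
  then show ?case
    using Cons.IH[OF K'_normal _ _ correction] Cons.prems(5) carr expand by simp
qed

end

locale commutator_tensor = comm_quotient +
  fixes R S :: "'a set" and c :: nat
  assumes R_normal: "R \<lhd> F" and S_normal: "S \<lhd> F" and R_subset_S: "R \<subseteq> S"
    and N_R: "itcomm F R (carrier F) c \<subseteq> N"
    and N_S: "itcomm F S (carrier F) (Suc c) \<subseteq> N"
    and N_gamma: "\<And>i. 2 \<le> i \<Longrightarrow> i \<le> c + 1 \<Longrightarrow> gammaSF F S c i \<subseteq> N"
    and N_subset_T: "N \<subseteq> itcomm F S (carrier F) c"
begin

abbreviation T where "T n \<equiv> itcomm F S (carrier F) n"

lemma T_normal: "T n \<lhd> F" by (rule itcomm_normal[OF S_normal])
lemma T_subgroup: "subgroup (T n) F" by (rule normal_imp_subgroup[OF T_normal])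
lemma T_subset: "T n \<subseteq> carrier F" by (rule normal_subset[OF T_normal])
lemma S_subset: "S \<subseteq> carrier F" by (rule normal_subset[OF S_normal])
lemma T_subset_S: "T n \<subseteq> S" using itcomm_antimono[OF S_normal, of 0 n] by simp
lemma T_subset_N: "Suc c \<le> n \<Longrightarrow> T n \<subseteq> N" using itcomm_antimono[OF S_normal] N_S by blast

text \<open>The correction terms
  produced by \<open>gcomm_mult_left_conj\<close> lie in \<open>[S, \<^sub>j\<^sub>+\<^sub>2 F]\<close> and are absorbed.\<close>

lemma lcomm_mult_first:
  assumes "x \<in> T j" "y \<in> S" "set gs \<subseteq> carrier F" "c \<le> j + length gs"
  shows "N #> lcomm F (x \<otimes> y) gs = (N #> lcomm F x gs) \<otimes>\<^bsub>Q\<^esub> (N #> lcomm F y gs)"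
  using assms
proof (induction gs arbitrary: x y j)
  case Nil
  then have "x \<in> carrier F" "y \<in> carrier F" using T_subset S_subset by auto
  then show ?case by (simp add: coset_mult)
next
  case (Cons g gs)
  have carr: "x \<in> carrier F" "y \<in> carrier F" "g \<in> carrier F"
    using Cons.prems T_subset S_subset by auto
  have xg: "gcomm F x g \<in> T (Suc j)" using Cons.prems(1) carr by (simp add: gcomm_in_commsub)
  have yg: "gcomm F y g \<in> S"
    using gcomm_in_commsub[OF Cons.prems(2) carr(3)] commsub_normal_subset[OF S_normal] by blast
  let ?e = "inv (gcomm F y g) \<otimes> gcomm F (gcomm F x g) y \<otimes> gcomm F y g"
  have e: "?e \<in> T (Suc (Suc j))"
  proof (rule normal.inv_op_closed1[OF T_normal])
    show "gcomm F (gcomm F x g) y \<in> T (Suc (Suc j))" using xg carr by (simp add: gcomm_in_commsub)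
  qed (use carr in simp)
  have absorbed: "itcomm F (T (Suc (Suc j))) (carrier F) (length gs) \<subseteq> N"
    unfolding itcomm_add by (rule T_subset_N) (use Cons.prems(4) in simp)
  have "gcomm F (x \<otimes> y) g = (gcomm F x g \<otimes> gcomm F y g) \<otimes> ?e"
    by (rule gcomm_mult_left_conj) (use carr in auto)
  then have "N #> lcomm F (x \<otimes> y) (g # gs) = N #> lcomm F ((gcomm F x g \<otimes> gcomm F y g) \<otimes> ?e) gs"
    by simp
  also have "\<dots> = N #> lcomm F (gcomm F x g \<otimes> gcomm F y g) gs"
    by (rule lcomm_absorb[OF T_normal absorbed _ e]) (use Cons.prems(3) carr in auto)
  also have "\<dots> = (N #> lcomm F (gcomm F x g) gs) \<otimes>\<^bsub>Q\<^esub> (N #> lcomm F (gcomm F y g) gs)"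
    by (rule Cons.IH[OF xg yg]) (use Cons.prems in auto)
  finally show ?case by simp
qed

lemma lcomm_mult_entry:
  assumes s: "s \<in> S" and as: "set as \<subseteq> carrier F" and bs: "set bs \<subseteq> carrier F"
    and f: "f \<in> carrier F" and g: "g \<in> carrier F" and len: "c \<le> length as + length bs + 1"
  shows "N #> lcomm F s (as @ (f \<otimes> g) # bs)
           = (N #> lcomm F s (as @ f # bs)) \<otimes>\<^bsub>Q\<^esub> (N #> lcomm F s (as @ g # bs))"
proof -
  define x where "x = lcomm F s as"
  have xT: "x \<in> T (length as)" unfolding x_def by (rule lcomm_in_itcomm[OF S_normal s as])
  have x: "x \<in> carrier F" using xT T_subset by blast
  have xf: "gcomm F x f \<in> T (Suc (length as))" using xT f by (simp add: gcomm_in_commsub)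
  have xg: "gcomm F x g \<in> T (Suc (length as))" using xT g by (simp add: gcomm_in_commsub)
  define e where "e = gcomm F (gcomm F x g) (gcomm F x f) \<otimes> gcomm F (gcomm F x f) g"
  have e: "e \<in> T (Suc (Suc (length as)))"
    unfolding e_def using xg xf x f g
    by (intro subgroup.m_closed[OF T_subgroup]) (simp_all add: gcomm_in_commsub)
  have absorbed: "itcomm F (T (Suc (Suc (length as)))) (carrier F) (length bs) \<subseteq> N"
    unfolding itcomm_add by (rule T_subset_N) (use len in simp)
  have "gcomm F x (f \<otimes> g) = (gcomm F x f \<otimes> gcomm F x g) \<otimes> e"
    unfolding e_def by (rule gcomm_mult_right) (use x f g in auto)
  then have "N #> lcomm F s (as @ (f \<otimes> g) # bs) = N #> lcomm F ((gcomm F x f \<otimes> gcomm F x g) \<otimes> e) bs"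
    by (simp add: lcomm_append x_def[symmetric])
  also have "\<dots> = N #> lcomm F (gcomm F x f \<otimes> gcomm F x g) bs"
    by (rule lcomm_absorb[OF T_normal absorbed _ e bs]) (use x f g in auto)
  also have "\<dots> = (N #> lcomm F (gcomm F x f) bs) \<otimes>\<^bsub>Q\<^esub> (N #> lcomm F (gcomm F x g) bs)"
  proof (rule lcomm_mult_first[OF xf _ bs])
    show "gcomm F x g \<in> S" using xg T_subset_S by blast
  qed (use len in simp)
  finally show ?thesis by (simp add: lcomm_append x_def[symmetric])
qed

text \<open>Modulo \<open>N\<close> the elements of \<open>[S, \<^sub>c F]\<close> commute, since \<open>[S, \<^sub>c\<^sub>+\<^sub>1 F] \<subseteq> N\<close>.\<close>

lemma coset_commute:
  assumes "x \<in> T c" "y \<in> T c"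
  shows "(N #> x) \<otimes>\<^bsub>Q\<^esub> (N #> y) = (N #> y) \<otimes>\<^bsub>Q\<^esub> (N #> x)"
proof -
  have carr: "x \<in> carrier F" "y \<in> carrier F" using assms T_subset by auto
  have "gcomm F x y \<in> T (Suc c)" using assms carr by (simp add: gcomm_in_commsub)
  then have "gcomm F x y \<in> N" using T_subset_N[of "Suc c"] by blast
  have "(N #> x) \<otimes>\<^bsub>Q\<^esub> (N #> y) = N #> (y \<otimes> x \<otimes> gcomm F x y)"
    unfolding coset_mult[OF carr, symmetric] mult_swap_gcomm[OF carr] ..
  also have "\<dots> = N #> (y \<otimes> x)"
    using \<open>gcomm F x y \<in> N\<close> carr by (intro coset_mult_N) auto
  also have "\<dots> = (N #> y) \<otimes>\<^bsub>Q\<^esub> (N #> x)" by (rule coset_mult[OF carr(2,1)])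
  finally show ?thesis .
qed

text \<open>An entry from \<open>S\<close> in position \<open>i \<ge> 2\<close> puts the commutator into \<open>\<gamma>\<^sub>c\<^sub>+\<^sub>1(S,F)\<^sub>i \<subseteq> N\<close>.\<close>

lemma lcomm_S_entry_in_N:
  assumes s: "s \<in> S" and k: "k \<in> S" and as: "set as \<subseteq> carrier F" and bs: "set bs \<subseteq> carrier F"
    and len: "length as + length bs + 1 = c"
  shows "lcomm F s (as @ k # bs) \<in> N"
proof -
  let ?K = "commsub F (T (length as)) S"
  have "gcomm F (lcomm F s as) k \<in> ?K"
    by (rule gcomm_in_commsub[OF lcomm_in_itcomm[OF S_normal s as] k])
  then have "lcomm F (gcomm F (lcomm F s as) k) bs \<in> itcomm F ?K (carrier F) (length bs)"
    by (rule lcomm_in_itcomm[OF commsub_normal[OF T_normal S_normal] _ bs])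
  moreover have "gammaSF F S c (length as + 2) = itcomm F ?K (carrier F) (length bs)"
  proof -
    have "2 \<le> length as + 2" "length as + 2 \<le> c + 1" "c + 1 - (length as + 2) = length bs"
      using len by simp_all
    then show ?thesis using gammaSF_eq[of "length as + 2" c F S] by simp
  qed
  moreover have "gammaSF F S c (length as + 2) \<subseteq> N" by (rule N_gamma) (use len in simp_all)
  ultimately show ?thesis unfolding lcomm_append lcomm.simps(2) by blast
qed

lemma lcomm_R_in_N:
  assumes "r \<in> R" "set fs \<subseteq> carrier F" "length fs = c"
  shows "lcomm F r fs \<in> N"
  using lcomm_in_itcomm[OF R_normal assms(1,2)] N_R assms(3) by blast

lemma lcomm_derived_S_in_N:
  assumes "u \<in> commsub F S S" "set fs \<subseteq> carrier F" "length fs = c"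
  shows "lcomm F u fs \<in> N"
proof -
  have "lcomm F u fs \<in> itcomm F (commsub F S S) (carrier F) c"
    using lcomm_in_itcomm[OF commsub_normal[OF S_normal S_normal] assms(1,2)] assms(3) by simp
  also have "\<dots> \<subseteq> itcomm F (T 1) (carrier F) c"
    by (rule itcomm_mono) (simp add: commsub_mono S_subset)
  also have "\<dots> = T (Suc c)" by (simp only: itcomm_add) simp
  finally show ?thesis using N_S by blast
qed

end

context commutator_tensor
begin

abbreviation H where "H \<equiv> generate F (R \<union> commsub F S S)"
abbreviation H2 where "H2 \<equiv> generate F (S \<union> commsub F (carrier F) (carrier F))"

lemma derived_S_subset_S: "commsub F S S \<subseteq> S"
  using commsub_mono[of S S S "carrier F"] commsub_normal_subset[OF S_normal] S_subset by blast

lemma H_subset_S: "H \<subseteq> S"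
  by (rule generate_subgroup_incl)
     (use R_subset_S derived_S_subset_S normal_imp_subgroup[OF S_normal] in auto)

lemma H_normal: "H \<lhd> F"
proof -
  have "generate F (\<Union>{R, commsub F S S}) \<lhd> F"
    by (rule generate_Union_normal) (use R_normal commsub_normal[OF S_normal S_normal] in auto)
  then show ?thesis by simp
qed

lemma H2_normal: "H2 \<lhd> F"
proof -
  have "generate F (\<Union>{S, commsub F (carrier F) (carrier F)}) \<lhd> F"
    by (rule generate_Union_normal)
       (use S_normal commsub_normal[OF normal_self normal_self] in auto)
  then show ?thesis by simp
qed

text \<open>A first entry from \<open>R[S,S]\<close> gives a trivial coset: \<open>s \<mapsto> N[s, f\<^sub>1, \<dots>, f\<^sub>c]\<close> is a
  homomorphism on \<open>S\<close> killing \<open>R\<close> and \<open>[S,S]\<close>.\<close>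

lemma lcomm_first_in_H:
  assumes fs: "set fs \<subseteq> carrier F" "length fs = c" and k: "k \<in> H"
  shows "N #> lcomm F k fs = \<one>\<^bsub>Q\<^esub>"
proof (rule generate_in_kernel[OF normal_imp_subgroup[OF S_normal] _ Q_group _ _ k])
  show "R \<union> commsub F S S \<subseteq> S" using R_subset_S derived_S_subset_S by blast
  show "(\<lambda>k. N #> lcomm F k fs) \<in> hom (F\<lparr>carrier := S\<rparr>) Q"
  proof (rule homI)
    fix x y assume "x \<in> carrier (F\<lparr>carrier := S\<rparr>)" "y \<in> carrier (F\<lparr>carrier := S\<rparr>)"
    then show "N #> lcomm F (x \<otimes>\<^bsub>F\<lparr>carrier := S\<rparr>\<^esub> y) fs
                 = (N #> lcomm F x fs) \<otimes>\<^bsub>Q\<^esub> (N #> lcomm F y fs)"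
      using lcomm_mult_first[of x 0 y fs] fs by simp
  next
    fix x assume "x \<in> carrier (F\<lparr>carrier := S\<rparr>)"
    then have "x \<in> carrier F" using S_subset by auto
    then show "N #> lcomm F x fs \<in> carrier Q" using fs by (intro coset_carrier lcomm_closed)
  qed
  fix u assume "u \<in> R \<union> commsub F S S"
  then show "N #> lcomm F u fs = \<one>\<^bsub>Q\<^esub>"
    using lcomm_R_in_N[OF _ fs] lcomm_derived_S_in_N[OF _ fs] coset_of_N by blast
qed

text \<open>An inner entry from \<open>S[F,F]\<close> gives a trivial coset: the entry map is a homomorphism
  into the abelian group \<open>[S, \<^sub>c F]/N\<close>, so it kills \<open>[F,F]\<close>, and it kills \<open>S\<close> because of
  the subgroups \<open>\<gamma>\<^sub>c\<^sub>+\<^sub>1(S,F)\<^sub>i\<close>.\<close>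

lemma lcomm_entry_in_H2:
  assumes s: "s \<in> S" and as: "set as \<subseteq> carrier F" and bs: "set bs \<subseteq> carrier F"
    and len: "length as + length bs + 1 = c" and k: "k \<in> H2"
  shows "N #> lcomm F s (as @ k # bs) = \<one>\<^bsub>Q\<^esub>"
proof -
  define V where "V z = N #> lcomm F s (as @ z # bs)" for z
  have s_carr: "s \<in> carrier F" using s S_subset by blast
  have V_T: "lcomm F s (as @ z # bs) \<in> T c" if "z \<in> carrier F" for z
  proof -
    have "length (as @ z # bs) = c" using len by simp
    then show ?thesis using lcomm_in_itcomm[OF S_normal s, of "as @ z # bs"] that as bs by auto
  qed
  have V_hom: "V \<in> hom F Q"
  proof (rule homI)
    show "V z \<in> carrier Q" if "z \<in> carrier F" for z
      unfolding V_def using that s_carr as bs by (intro coset_carrier) simp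
    show "V (a \<otimes> b) = V a \<otimes>\<^bsub>Q\<^esub> V b" if "a \<in> carrier F" "b \<in> carrier F" for a b
      unfolding V_def by (rule lcomm_mult_entry[OF s as bs that]) (use len in simp)
  qed
  then interpret V: group_hom F Q V
    unfolding group_hom_def group_hom_axioms_def using is_group Q_group by simp
  show ?thesis
    unfolding V_def[symmetric]
  proof (rule generate_in_kernel[OF subgroup_self _ Q_group _ _ k])
    show "S \<union> commsub F (carrier F) (carrier F) \<subseteq> carrier F" using S_subset commsub_subset by blast
    show "V \<in> hom (F\<lparr>carrier := carrier F\<rparr>) Q" using V_hom by simp
    fix u assume "u \<in> S \<union> commsub F (carrier F) (carrier F)"
    then show "V u = \<one>\<^bsub>Q\<^esub>"
    proof
      assume "u \<in> S"
      then show ?thesis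
        unfolding V_def using lcomm_S_entry_in_N[OF s _ as bs len] coset_of_N by blast
    next
      assume "u \<in> commsub F (carrier F) (carrier F)"
      then show ?thesis
        by (rule V.derived_subgroup_in_kernel[rotated]) (simp add: V_def V_T coset_commute)
    qed
  qed
qed

lemma lcomm_first_coset:
  assumes fs: "set fs \<subseteq> carrier F" "length fs = c" and s: "s \<in> S" "s' \<in> S"
    and eq: "H #> s = H #> s'"
  shows "N #> lcomm F s fs = N #> lcomm F s' fs"
proof -
  have "s \<in> H #> s'"
    using rcos_self[OF _ normal_imp_subgroup[OF H_normal]] s S_subset eq by blast
  then obtain h where h: "h \<in> H" "s = h \<otimes> s'" unfolding r_coset_def by auto
  have "N #> lcomm F s fs = (N #> lcomm F h fs) \<otimes>\<^bsub>Q\<^esub> (N #> lcomm F s' fs)"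
    unfolding h(2) by (rule lcomm_mult_first[of h 0]) (use h H_subset_S s fs in auto)
  also have "\<dots> = N #> lcomm F s' fs"
    using lcomm_first_in_H[OF fs h(1)] monoid.l_one[OF group.is_monoid[OF Q_group] coset_carrier]
      s S_subset fs by (simp add: subsetD)
  finally show ?thesis .
qed

lemma lcomm_entry_coset:
  assumes s: "s \<in> S" and as: "set as \<subseteq> carrier F" and bs: "set bs \<subseteq> carrier F"
    and f: "f \<in> carrier F" "f' \<in> carrier F" and eq: "H2 #> f = H2 #> f'"
    and len: "length as + length bs + 1 = c"
  shows "N #> lcomm F s (as @ f # bs) = N #> lcomm F s (as @ f' # bs)"
proof -
  have "f \<in> H2 #> f'" using rcos_self[OF f(1) normal_imp_subgroup[OF H2_normal]] eq by simp
  then obtain h where h: "h \<in> H2" "f = h \<otimes> f'" unfolding r_coset_def by auto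
  have h_carr: "h \<in> carrier F" using h(1) normal_subset[OF H2_normal] by blast
  have "N #> lcomm F s (as @ f # bs)
          = (N #> lcomm F s (as @ h # bs)) \<otimes>\<^bsub>Q\<^esub> (N #> lcomm F s (as @ f' # bs))"
    unfolding h(2) by (rule lcomm_mult_entry[OF s as bs h_carr f(2)]) (use len in simp)
  also have "\<dots> = N #> lcomm F s (as @ f' # bs)"
    using lcomm_entry_in_H2[OF s as bs len h(1)] monoid.l_one[OF group.is_monoid[OF Q_group] coset_carrier]
      s S_subset as bs f by (simp add: subsetD)
  finally show ?thesis .
qed

lemma lcomm_entries_coset:
  assumes s: "s \<in> S" and as: "set as \<subseteq> carrier F"
    and fs: "set fs \<subseteq> carrier F" and fs': "set fs' \<subseteq> carrier F"
    and eq: "map (\<lambda>f. H2 #> f) fs = map (\<lambda>f. H2 #> f) fs'" and len: "length as + length fs = c"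
  shows "N #> lcomm F s (as @ fs) = N #> lcomm F s (as @ fs')"
  using as fs fs' eq len
proof (induction fs arbitrary: fs' as)
  case Nil
  then show ?case by simp
next
  case (Cons f fs)
  then obtain f' fs'' where fs': "fs' = f' # fs''" by (cases fs') auto
  have "N #> lcomm F s (as @ f # fs) = N #> lcomm F s (as @ f' # fs)"
    by (rule lcomm_entry_coset[OF s]) (use Cons.prems fs' in auto)
  also have "\<dots> = N #> lcomm F s ((as @ [f']) @ fs)" by simp
  also have "\<dots> = N #> lcomm F s ((as @ [f']) @ fs'')"
    by (rule Cons.IH) (use Cons.prems fs' in auto)
  finally show ?case using fs' by simp
qed

end

lemma r_coset_carrier_update: "H #>\<^bsub>G\<lparr>carrier := J\<rparr>\<^esub> a = H #>\<^bsub>G\<^esub> a"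
  by (simp add: r_coset_def)

lemma carrier_Mod_carrier_update: "carrier ((G\<lparr>carrier := J\<rparr>) Mod N) = (\<lambda>x. N #>\<^bsub>G\<^esub> x) ` J"
  by (simp add: carrier_FactGroup r_coset_carrier_update)

lemma mult_Mod_carrier_update: "A \<otimes>\<^bsub>(G\<lparr>carrier := J\<rparr>) Mod N\<^esub> B = A \<otimes>\<^bsub>G Mod N\<^esub> B"
  by (simp add: set_mult_def mult_FactGroup)

lemma one_Mod_carrier_update: "\<one>\<^bsub>(G\<lparr>carrier := J\<rparr>) Mod N\<^esub> = \<one>\<^bsub>G Mod N\<^esub>"
  by (simp add: one_FactGroup)

context commutator_tensor
begin

abbreviation target where "target \<equiv> (F\<lparr>carrier := T c\<rparr>) Mod N"

lemma target_comm_group: "comm_group target"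
proof -
  interpret Tc: group "F\<lparr>carrier := T c\<rparr>"
    by (rule subgroup.subgroup_is_group[OF T_subgroup is_group])
  have "N \<lhd> F\<lparr>carrier := T c\<rparr>"
  proof (subst Tc.normal_inv_iff, intro conjI ballI)
    show "subgroup N (F\<lparr>carrier := T c\<rparr>)"
      by (rule subgroup_incl[OF normal_imp_subgroup[OF N_normal] T_subgroup N_subset_T])
    fix x h assume "x \<in> carrier (F\<lparr>carrier := T c\<rparr>)" "h \<in> N"
    moreover have "x \<in> carrier F" using calculation(1) T_subset by auto
    ultimately show "x \<otimes>\<^bsub>F\<lparr>carrier := T c\<rparr>\<^esub> h \<otimes>\<^bsub>F\<lparr>carrier := T c\<rparr>\<^esub> inv\<^bsub>F\<lparr>carrier := T c\<rparr>\<^esub> x \<in> N"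
      using normal.inv_op_closed2[OF N_normal] m_inv_consistent[OF T_subgroup] by simp
  qed
  then interpret target: group target by (rule normal.factorgroup_is_group)
  show ?thesis
  proof (rule target.group_comm_groupI)
    fix a b assume "a \<in> carrier target" "b \<in> carrier target"
    then obtain x y where "x \<in> T c" "y \<in> T c" "a = N #> x" "b = N #> y"
      unfolding carrier_Mod_carrier_update by auto
    then show "a \<otimes>\<^bsub>target\<^esub> b = b \<otimes>\<^bsub>target\<^esub> a"
      unfolding mult_Mod_carrier_update using coset_commute by simp
  qed
qed

lemma commutator_cosets_in_subgroup:
  assumes I: "subgroup I target"
    and gens: "\<And>s gs. s \<in> S \<Longrightarrow> set gs \<subseteq> carrier F \<Longrightarrow> length gs = c \<Longrightarrow> N #> lcomm F s gs \<in> I"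
  shows "j \<le> c \<Longrightarrow> x \<in> T j \<Longrightarrow> set gs \<subseteq> carrier F \<Longrightarrow> j + length gs = c \<Longrightarrow> N #> lcomm F x gs \<in> I"
proof (induction j arbitrary: x gs)
  case 0
  then show ?case using gens by simp
next
  case (Suc j)
  interpret target: comm_group target by (rule target_comm_group)
  interpret I: subgroup I target by (rule I)
  have in_target: "N #> lcomm F z gs \<in> carrier target" if "z \<in> T (Suc j)" for z
  proof -
    have "lcomm F z gs \<in> T (Suc j + length gs)"
      using lcomm_in_itcomm[OF T_normal that Suc.prems(3)] by (simp only: itcomm_add)
    then have "lcomm F z gs \<in> T c" by (simp only: Suc.prems(4))
    then show ?thesis unfolding carrier_Mod_carrier_update by (rule imageI)
  qed
  have generator: "N #> lcomm F z gs \<in> I"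
    if z: "z \<in> {gcomm F h k |h k. h \<in> T j \<and> k \<in> carrier F}" for z
  proof -
    obtain h k where "z = gcomm F h k" "h \<in> T j" "k \<in> carrier F" using z by auto
    then show ?thesis using Suc.IH[of h "k # gs"] Suc.prems by simp
  qed
  have T_Suc: "T (Suc j) = generate F {gcomm F h k |h k. h \<in> T j \<and> k \<in> carrier F}"
    by (simp add: commsub_def)
  from Suc.prems(2) have "x \<in> generate F {gcomm F h k |h k. h \<in> T j \<and> k \<in> carrier F}"
    unfolding T_Suc .
  then show ?case
  proof (induction x rule: generate.induct)
    case one
    have "N #> lcomm F \<one> gs = \<one>\<^bsub>target\<^esub>"
      using Suc.prems(3) by (simp add: coset_one one_Mod_carrier_update)
    then show ?case using I.one_closed by simp
  next
    case (incl z)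
    then show ?case by (rule generator)
  next
    case (inv z)
    have z: "z \<in> T (Suc j)" unfolding T_Suc using inv by (rule generate.incl)
    have z_inv: "inv z \<in> T (Suc j)" by (rule subgroup.m_inv_closed[OF T_subgroup z])
    have z_carr: "z \<in> carrier F" and z_inv_S: "inv z \<in> S" using z z_inv T_subset T_subset_S by blast+
    have "(N #> lcomm F z gs) \<otimes>\<^bsub>target\<^esub> (N #> lcomm F (inv z) gs) = N #> lcomm F (z \<otimes> inv z) gs"
      unfolding mult_Mod_carrier_update
      by (rule lcomm_mult_first[OF z z_inv_S Suc.prems(3), symmetric]) (use Suc.prems(4) in simp)
    also have "\<dots> = \<one>\<^bsub>target\<^esub>"
      using z_carr Suc.prems(3) by (simp add: coset_one one_Mod_carrier_update)
    finally have "inv\<^bsub>target\<^esub> (N #> lcomm F z gs) = N #> lcomm F (inv z) gs"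
      by (rule target.comm_inv_char[OF in_target[OF z] in_target[OF z_inv]])
    then show ?case using I.m_inv_closed[OF generator[OF inv]] by simp
  next
    case (eng z1 z2)
    have z1: "z1 \<in> T (Suc j)" and "z2 \<in> T (Suc j)" unfolding T_Suc by (fact eng.hyps)+
    then have z2: "z2 \<in> S" using T_subset_S by blast
    have "N #> lcomm F (z1 \<otimes> z2) gs = (N #> lcomm F z1 gs) \<otimes>\<^bsub>target\<^esub> (N #> lcomm F z2 gs)"
      unfolding mult_Mod_carrier_update
      by (rule lcomm_mult_first[OF z1 z2 Suc.prems(3)]) (use Suc.prems(4) in simp)
    then show ?case using I.m_closed[OF eng.IH] by simp
  qed
qed

lemma commutator_cosets_generate:
  assumes I: "subgroup I target"
    and gens: "\<And>s gs. s \<in> S \<Longrightarrow> set gs \<subseteq> carrier F \<Longrightarrow> length gs = c \<Longrightarrow> N #> lcomm F s gs \<in> I"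
  shows "carrier target \<subseteq> I"
proof
  fix y assume "y \<in> carrier target"
  then obtain x where x: "x \<in> T c" "y = N #> x" unfolding carrier_Mod_carrier_update by blast
  have "N #> lcomm F x [] \<in> I"
    by (rule commutator_cosets_in_subgroup[OF I gens]) (use x in simp_all)
  then show "y \<in> I" using x by simp
qed

end

section \<open>The epimorphism from the tensor product\<close>

context commutator_tensor
begin

abbreviation B_ab where "B_ab \<equiv> (F\<lparr>carrier := S\<rparr>) Mod H"
abbreviation A_ab where "A_ab \<equiv> F Mod H2"

lemma B_ab_mult:
  "s1 \<in> S \<Longrightarrow> s2 \<in> S \<Longrightarrow> (H #> s1) \<otimes>\<^bsub>B_ab\<^esub> (H #> s2) = H #> (s1 \<otimes> s2)"
  using S_subset normal.rcos_sum[OF H_normal] by (auto simp: mult_Mod_carrier_update mult_FactGroup)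

lemma A_ab_mult:
  "f1 \<in> carrier F \<Longrightarrow> f2 \<in> carrier F \<Longrightarrow> (H2 #> f1) \<otimes>\<^bsub>A_ab\<^esub> (H2 #> f2) = H2 #> (f1 \<otimes> f2)"
  using normal.rcos_sum[OF H2_normal] by (simp add: mult_FactGroup)

lemma cosets_in_tens_gens:
  "s \<in> S \<Longrightarrow> set fs \<subseteq> carrier F \<Longrightarrow> length fs = c
   \<Longrightarrow> (H #> s, map (\<lambda>f. H2 #> f) fs) \<in> tens_gens B_ab A_ab c"
  unfolding tens_gens_def carrier_Mod_carrier_update carrier_FactGroup by auto

lemma tens_gens_cosets:
  assumes "p \<in> tens_gens B_ab A_ab c"
  obtains s fs where "s \<in> S" "set fs \<subseteq> carrier F" "length fs = c"
    "p = (H #> s, map (\<lambda>f. H2 #> f) fs)"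
proof -
  obtain b as where p: "p = (b, as)" "b \<in> carrier B_ab" "length as = c" "set as \<subseteq> carrier A_ab"
    using assms unfolding tens_gens_def by auto
  obtain s where s: "s \<in> S" "b = H #> s" using p(2) unfolding carrier_Mod_carrier_update by auto
  have "as \<in> lists ((\<lambda>f. H2 #> f) ` carrier F)"
    using p(4) unfolding carrier_FactGroup by auto
  then obtain fs where "fs \<in> lists (carrier F)" "as = map (\<lambda>f. H2 #> f) fs"
    unfolding lists_image by auto
  then show thesis using that s p by auto
qed

definition comm_value :: "'a set \<times> 'a set list \<Rightarrow> 'a set" where
  "comm_value p = N #> lcomm F (SOME s. s \<in> S \<and> fst p = H #> s)
                               (map (\<lambda>a. SOME f. f \<in> carrier F \<and> a = H2 #> f) (snd p))"

lemma comm_value_eq: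
  assumes s: "s \<in> S" and fs: "set fs \<subseteq> carrier F" "length fs = c"
  shows "comm_value (H #> s, map (\<lambda>f. H2 #> f) fs) = N #> lcomm F s fs"
proof -
  define s0 where "s0 = (SOME s'. s' \<in> S \<and> H #> s = H #> s')"
  define rep where "rep = (\<lambda>f. SOME f'. f' \<in> carrier F \<and> H2 #> f = H2 #> f')"
  have "s0 \<in> S \<and> H #> s = H #> s0"
    unfolding s0_def by (rule someI[of "\<lambda>s'. s' \<in> S \<and> H #> s = H #> s'" s]) (simp add: s)
  then have s0: "s0 \<in> S" "H #> s = H #> s0" by auto
  have rep: "rep f \<in> carrier F \<and> H2 #> f = H2 #> rep f" if "f \<in> carrier F" for f
    unfolding rep_def by (rule someI[of "\<lambda>f'. f' \<in> carrier F \<and> H2 #> f = H2 #> f'" f]) (simp add: that)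
  have reps: "set (map rep fs) \<subseteq> carrier F" "map (\<lambda>f. H2 #> f) (map rep fs) = map (\<lambda>f. H2 #> f) fs"
    using rep fs(1) by auto
  have "comm_value (H #> s, map (\<lambda>f. H2 #> f) fs) = N #> lcomm F s0 (map rep fs)"
    by (simp add: comm_value_def s0_def rep_def comp_def)
  also have "\<dots> = N #> lcomm F s (map rep fs)"
    by (rule lcomm_first_coset[OF reps(1) _ s0(1) s s0(2)[symmetric]]) (simp add: fs(2))
  also have "\<dots> = N #> lcomm F s ([] @ fs)"
    using lcomm_entries_coset[OF s _ reps(1) fs(1) reps(2)] fs(2) by simp
  finally show ?thesis by simp
qed

lemma comm_value_carrier:
  assumes "p \<in> tens_gens B_ab A_ab c" shows "comm_value p \<in> carrier target"
proof -
  obtain s fs where s: "s \<in> S" and fs: "set fs \<subseteq> carrier F" "length fs = c"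
    and p: "p = (H #> s, map (\<lambda>f. H2 #> f) fs)"
    using tens_gens_cosets[OF assms] by blast
  have "lcomm F s fs \<in> T c" using lcomm_in_itcomm[OF S_normal s fs(1)] fs(2) by simp
  then show ?thesis
    unfolding p carrier_Mod_carrier_update comm_value_eq[OF s fs] by (rule imageI)
qed

lemma comm_value_mult_first:
  assumes "b1 \<in> carrier B_ab" "b2 \<in> carrier B_ab" "length as = c" "set as \<subseteq> carrier A_ab"
  shows "comm_value (b1 \<otimes>\<^bsub>B_ab\<^esub> b2, as) = comm_value (b1, as) \<otimes>\<^bsub>target\<^esub> comm_value (b2, as)"
proof -
  obtain s1 fs where s1: "s1 \<in> S" "set fs \<subseteq> carrier F" "length fs = c"
    "(b1, as) = (H #> s1, map (\<lambda>f. H2 #> f) fs)"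
    using tens_gens_cosets[of "(b1, as)"] assms unfolding tens_gens_def by blast
  obtain s2 where s2: "s2 \<in> S" "b2 = H #> s2"
    using assms(2) unfolding carrier_Mod_carrier_update by auto
  have s12: "s1 \<otimes> s2 \<in> S" using subgroup.m_closed[OF normal_imp_subgroup[OF S_normal] s1(1) s2(1)] .
  have "N #> lcomm F (s1 \<otimes> s2) fs = (N #> lcomm F s1 fs) \<otimes>\<^bsub>Q\<^esub> (N #> lcomm F s2 fs)"
    by (rule lcomm_mult_first[of s1 0]) (use s1 s2 in auto)
  then show ?thesis
    using s1 s2 B_ab_mult[OF s1(1) s2(1)]
    by (simp add: comm_value_eq s12 mult_Mod_carrier_update)
qed

lemma comm_value_mult_entry:
  assumes b: "b \<in> carrier B_ab" and as: "length as = c" "set as \<subseteq> carrier A_ab" and j: "j < c"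
    and a: "a1 \<in> carrier A_ab" "a2 \<in> carrier A_ab"
  shows "comm_value (b, as[j := a1 \<otimes>\<^bsub>A_ab\<^esub> a2])
           = comm_value (b, as[j := a1]) \<otimes>\<^bsub>target\<^esub> comm_value (b, as[j := a2])"
proof -
  obtain s fs where sf: "s \<in> S" "set fs \<subseteq> carrier F" "length fs = c"
    "(b, as) = (H #> s, map (\<lambda>f. H2 #> f) fs)"
    using tens_gens_cosets[of "(b, as)"] assms unfolding tens_gens_def by blast
  obtain f1 f2 where f: "f1 \<in> carrier F" "a1 = H2 #> f1" "f2 \<in> carrier F" "a2 = H2 #> f2"
    using a unfolding carrier_FactGroup by auto
  have upd: "as[j := H2 #> f] = map (\<lambda>f. H2 #> f) (take j fs @ f # drop (Suc j) fs)" for f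
    using sf(3,4) j by (simp add: map_update upd_conv_take_nth_drop take_map drop_map)
  have parts: "set (take j fs) \<subseteq> carrier F" "set (drop (Suc j) fs) \<subseteq> carrier F"
    "length (take j fs) + length (drop (Suc j) fs) + 1 = c"
    using sf(2,3) j by (auto dest: in_set_takeD in_set_dropD)
  have coset_value: "comm_value (b, as[j := H2 #> f]) = N #> lcomm F s (take j fs @ f # drop (Suc j) fs)"
    if "f \<in> carrier F" for f
  proof -
    have "(b, as[j := H2 #> f]) = (H #> s, map (\<lambda>f. H2 #> f) (take j fs @ f # drop (Suc j) fs))"
      using sf(4) upd by simp
    then show ?thesis by (simp only:) (rule comm_value_eq[OF sf(1)], use parts that in auto)
  qed
  have "N #> lcomm F s (take j fs @ (f1 \<otimes> f2) # drop (Suc j) fs)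
          = (N #> lcomm F s (take j fs @ f1 # drop (Suc j) fs))
            \<otimes>\<^bsub>Q\<^esub> (N #> lcomm F s (take j fs @ f2 # drop (Suc j) fs))"
    by (rule lcomm_mult_entry[OF sf(1) parts(1,2) f(1,3)]) (use parts(3) in simp)
  then show ?thesis
    using coset_value f A_ab_mult[OF f(1,3)] by (simp add: mult_Mod_carrier_update)
qed

theorem commutator_tensor_epi:
  "\<exists>\<phi>. \<phi> \<in> epi (tensor B_ab A_ab c) target
     \<and> (\<forall>s \<in> S. \<forall>fs. length fs = c \<and> set fs \<subseteq> carrier F \<longrightarrow>
          \<phi> (pure_tensor B_ab A_ab c (H #> s) (map (\<lambda>f. H2 #> f) fs)) = N #> lcomm F s fs)"
proof -
  have B_closed: "b1 \<otimes>\<^bsub>B_ab\<^esub> b2 \<in> carrier B_ab" if "b1 \<in> carrier B_ab" "b2 \<in> carrier B_ab" for b1 b2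
    using that B_ab_mult subgroup.m_closed[OF normal_imp_subgroup[OF S_normal]]
    unfolding carrier_Mod_carrier_update by auto
  have A_closed: "a1 \<otimes>\<^bsub>A_ab\<^esub> a2 \<in> carrier A_ab" if "a1 \<in> carrier A_ab" "a2 \<in> carrier A_ab" for a1 a2
    using that A_ab_mult unfolding carrier_FactGroup by auto
  obtain \<phi> where \<phi>: "\<phi> \<in> hom (tensor B_ab A_ab c) target"
      "subgroup (\<phi> ` carrier (tensor B_ab A_ab c)) target"
      "\<And>b as. (b, as) \<in> tens_gens B_ab A_ab c \<Longrightarrow> \<phi> (pure_tensor B_ab A_ab c b as) = comm_value (b, as)"
    using tensor_universal[where K = target and XX = B_ab and YY = A_ab and f = comm_value and c = c,
        OF target_comm_group B_closed A_closed comm_value_carrier comm_value_mult_first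
        comm_value_mult_entry]
    by blast
  have pure: "\<phi> (pure_tensor B_ab A_ab c (H #> s) (map (\<lambda>f. H2 #> f) fs)) = N #> lcomm F s fs"
    if "s \<in> S" "set fs \<subseteq> carrier F" "length fs = c" for s fs
    using \<phi>(3)[OF cosets_in_tens_gens[OF that]] comm_value_eq[OF that] by simp
  have "carrier target \<subseteq> \<phi> ` carrier (tensor B_ab A_ab c)"
  proof (rule commutator_cosets_generate[OF \<phi>(2)])
    fix s gs assume "s \<in> S" "set gs \<subseteq> carrier F" "length gs = c"
    then show "N #> lcomm F s gs \<in> \<phi> ` carrier (tensor B_ab A_ab c)"
      using pure pure_tensor_carrier[OF cosets_in_tens_gens] by (metis imageI)
  qed
  then have "\<phi> \<in> epi (tensor B_ab A_ab c) target"
    using \<phi>(1) hom_in_carrier unfolding epi_def by fastforce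
  then show ?thesis using pure by blast
qed

end

lemma (in group) commutator_tensor_instance:
  assumes R: "R \<lhd> G" and S: "S \<lhd> G" and RS: "R \<subseteq> S"
  shows "commutator_tensor G (generate G (itcomm G R (carrier G) c \<union> itcomm G S (carrier G) (Suc c)
                                        \<union> (\<Union>i\<in>{2..c+1}. gammaSF G S c i))) R S c"
    (is "commutator_tensor G (generate G ?gens) R S c")
proof -
  let ?N = "generate G ?gens"
  let ?\<U> = "{itcomm G R (carrier G) c, itcomm G S (carrier G) (Suc c)} \<union> gammaSF G S c ` {2..c+1}"
  have "?gens = \<Union>?\<U>" by auto
  moreover have "U \<lhd> G" if "U \<in> ?\<U>" for U
  proof -
    have "itcomm G R (carrier G) c \<lhd> G" "itcomm G S (carrier G) (Suc c) \<lhd> G"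
      by (rule itcomm_normal[OF R], rule itcomm_normal[OF S])
    moreover have "gammaSF G S c i \<lhd> G" if "i \<in> {2..c+1}" for i
      using gammaSF_normal[OF S] that by simp
    ultimately show ?thesis using that by blast
  qed
  ultimately have N_normal: "?N \<lhd> G" using generate_Union_normal by metis
  have "itcomm G R (carrier G) c \<subseteq> itcomm G S (carrier G) c" by (rule itcomm_mono[OF RS])
  moreover have "itcomm G S (carrier G) (Suc c) \<subseteq> itcomm G S (carrier G) c"
    by (rule itcomm_antimono[OF S]) simp
  moreover have "gammaSF G S c i \<subseteq> itcomm G S (carrier G) c" if "i \<in> {2..c+1}" for i
    using gammaSF_subset[OF S] that by simp
  ultimately have "?gens \<subseteq> itcomm G S (carrier G) c" by blast
  then have N_subset_T: "?N \<subseteq> itcomm G S (carrier G) c"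
    by (rule generate_subgroup_incl[OF _ normal_imp_subgroup[OF itcomm_normal[OF S]]])
  have gens_N: "?gens \<subseteq> ?N" by (rule subsetI) (rule generate.incl)
  then have N_R: "itcomm G R (carrier G) c \<subseteq> ?N"
    and N_S: "itcomm G S (carrier G) (Suc c) \<subseteq> ?N" by blast+
  have N_gamma: "gammaSF G S c i \<subseteq> ?N" if "2 \<le> i" "i \<le> c + 1" for i
  proof -
    have "i \<in> {2..c+1}" using that by simp
    then show ?thesis using gens_N by blast
  qed
  have "comm_quotient G ?N" by (intro comm_quotient.intro comm_quotient_axioms.intro is_group N_normal)
  then show ?thesis
    by (rule commutator_tensor.intro[OF _ commutator_tensor_axioms.intro])
       (fact R S RS N_R N_S N_gamma N_subset_T)+
qed

theorem lemma22:
  fixes F :: "('a, 'b) monoid_scheme" and R S :: "'a set" and c :: nat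
  assumes "free_group F"
    and "R \<lhd> F" and "S \<lhd> F" and "R \<subseteq> S"
    and "c \<ge> 1"
  defines "Bab \<equiv> (F\<lparr>carrier := S\<rparr>) Mod (generate F (R \<union> commsub F S S))"
    and "Aab \<equiv> F Mod (generate F (S \<union> commsub F (carrier F) (carrier F)))"
    and "N \<equiv> generate F (itcomm F R (carrier F) c \<union> itcomm F S (carrier F) (Suc c)
                          \<union> (\<Union>i\<in>{2..c+1}. gammaSF F S c i))"
  shows "\<exists>\<phi>. \<phi> \<in> epi (tensor Bab Aab c) ((F\<lparr>carrier := itcomm F S (carrier F) c\<rparr>) Mod N)
           \<and> (\<forall>s \<in> S. \<forall>fs. length fs = c \<and> set fs \<subseteq> carrier F \<longrightarrow>
                \<phi> (pure_tensor Bab Aab c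
                      (generate F (R \<union> commsub F S S) #>\<^bsub>F\<^esub> s)
                      (map (\<lambda>f. generate F (S \<union> commsub F (carrier F) (carrier F)) #>\<^bsub>F\<^esub> f) fs))
                = N #>\<^bsub>F\<^esub> lcomm F s fs)"
proof -
  interpret group F using \<open>free_group F\<close> by (simp add: free_group_def)
  interpret commutator_tensor F N R S c
    unfolding N_def by (rule commutator_tensor_instance[OF assms(2-4)])
  show ?thesis unfolding Bab_def Aab_def by (rule commutator_tensor_epi)
qed
end
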